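(* Let $f:\mathbb{R}^m\to\mathbb{R}^n$ be a ReLU network with $l$ hidden layers and $N$ neurons in total, and let $\mathrm{code}_f:\mathbb{R}^m\to\{0,1\}^N$ be its ReLU code map. For $\vec x,\vec y\in\mathbb{R}^m$ define $\vec x\sim_f\vec y$ iff $d_{\mathrm H}(\mathrm{code}_f(\vec x),\mathrm{code}_f(\vec y))=0$, and let $[\vec x]_f=\{\vec z\in\mathbb{R}^m\mid \vec z\sim_f\vec x\}$ denote the equivalence classes. Then: (1) There is a one-to-one correspondence between the code space $\mathcal{X}_f=\{\mathrm{code}_f(\vec x)\mid \vec x\in\mathbb{R}^m\}$ and the set of equivalence classes $\{[\vec x]_f\mid \vec x\in\mathbb{R}^m\}$. (2) For every $\vec x\in\mathbb{R}^m$, the topological closure $\overline{[\vec x]_f}$ of $[\vec x]_f$ is a polyhedron, i.e. the intersection of a finite number of closed half-spaces (or all of $\mathbb{R}^m$). (3) For every $\vec x\in\mathbb{R}^m$, the equivalence class $[\vec x]_f$ is the disjoint union of the relative interiors $\mathrm{relint}(F)$ of faces $F$ of the polyhedron $P=\overline{[\vec x]_f}$, and these relative interiors form a lattice structure (with $\mathrm{relint}(F_1)\prec\mathrm{relint}(F_2)$ iff $F_1\subseteq F_2$, inherited from the face lattice of $P$ ordered by inclusion).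
   Context: A ReLU network is a function $f(\vec x)=\xi\circ\mathrm{relu}\circ g_l\circ\cdots\circ\mathrm{relu}\circ g_1(\vec x)$, where $\mathrm{relu}(z)=\max\{0,z\}$ is applied componentwise, $\xi$ is an output function, and each $g_k:\mathbb{R}^{n_{k-1}}\to\mathbb{R}^{n_k}$ ($n_0=m$) is affine, $g_k(\vec x)=W_k\vec x+\vec b_k$. The total number of neurons is $N=\sum_{k=1}^l n_k$. The activation vector at layer $k$ is $\vec a_k(\vec x)=(a^{(k)}_1(\vec x),\dots,a^{(k)}_{n_k}(\vec x))=\mathrm{relu}\circ g_k\circ\cdots\circ\mathrm{relu}\circ g_1(\vec x)$. The ReLU code of $\vec x$ is $\mathrm{code}_f(\vec x)=(\beta^{(1)}_1,\dots,\beta^{(1)}_{n_1},\dots,\beta^{(l)}_1,\dots,\beta^{(l)}_{n_l})\in\{0,1\}^N$ with $\beta^{(k)}_i=1$ if $a^{(k)}_i(\vec x)>0$ and $\beta^{(k)}_i=0$ otherwise. $d_{\mathrm H}(a,b)=|\{j\in\{1,\dots,N\}\mid a_j\neq b_j\}|$ is the Hamming distance on $\{0,1\}^N$. For a convex set $F$, $\mathrm{relint}(F)$ is its interior relative to its affine hull. *)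

theory Defs
  imports "HOL-Analysis.Analysis"
begin

text \<open>A ReLU network with input space real^'m is given by its hidden layers.
  The output function xi plays no role for ReLU codes and is omitted.\<close>

definition relu :: "real \<Rightarrow> real" where
  "relu z = max 0 z"

definition affine_row :: "real list \<Rightarrow> real \<Rightarrow> real list \<Rightarrow> real" where
  "affine_row w b a = sum_list (map2 (*) w a) + b"

definition first_layer_act :: "((real^'m) \<times> real) list \<Rightarrow> real^'m \<Rightarrow> real list" where
  "first_layer_act L1 x = map (\<lambda>(w, b). relu (w \<bullet> x + b)) L1"

definition layer_act :: "(real list \<times> real) list \<Rightarrow> real list \<Rightarrow> real list" where
  "layer_act L a = map (\<lambda>(w, b). relu (affine_row w b a)) L"

fun later_acts :: "(real list \<times> real) list list \<Rightarrow> real list \<Rightarrow> real list list" where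
  "later_acts [] a = []"
| "later_acts (L # Ls) a = (let a' = layer_act L a in a' # later_acts Ls a')"

definition activations ::
  "((real^'m) \<times> real) list \<Rightarrow> (real list \<times> real) list list \<Rightarrow> real^'m \<Rightarrow> real list list" where
  "activations L1 Ls x = (let a1 = first_layer_act L1 x in a1 # later_acts Ls a1)"

fun wf_later :: "nat \<Rightarrow> (real list \<times> real) list list \<Rightarrow> bool" where
  "wf_later n [] = True"
| "wf_later n (L # Ls) = (L \<noteq> [] \<and> (\<forall>(w, b) \<in> set L. length w = n) \<and> wf_later (length L) Ls)"

definition wf_relu_net :: "((real^'m) \<times> real) list \<Rightarrow> (real list \<times> real) list list \<Rightarrow> bool" where
  "wf_relu_net L1 Ls = (L1 \<noteq> [] \<and> wf_later (length L1) Ls)"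

text \<open>ReLU code in {0,1}^N, as a list of naturals of length N.\<close>
definition relu_code ::
  "((real^'m) \<times> real) list \<Rightarrow> (real list \<times> real) list list \<Rightarrow> real^'m \<Rightarrow> nat list" where
  "relu_code L1 Ls x = concat (map (map (\<lambda>z. if z > 0 then 1 else 0)) (activations L1 Ls x))"

definition hamming :: "nat list \<Rightarrow> nat list \<Rightarrow> nat" where
  "hamming a b = card {j. j < length a \<and> a ! j \<noteq> b ! j}"

definition relu_equiv ::
  "((real^'m) \<times> real) list \<Rightarrow> (real list \<times> real) list list \<Rightarrow> real^'m \<Rightarrow> real^'m \<Rightarrow> bool" where
  "relu_equiv L1 Ls x y = (hamming (relu_code L1 Ls x) (relu_code L1 Ls y) = 0)"

definition relu_class ::
  "((real^'m) \<times> real) list \<Rightarrow> (real list \<times> real) list list \<Rightarrow> real^'m \<Rightarrow> (real^'m) set" where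
  "relu_class L1 Ls x = {z. relu_equiv L1 Ls z x}"

definition is_incl_lattice :: "'a set set \<Rightarrow> bool" where
  "is_incl_lattice \<F> =
    (\<forall>F1\<in>\<F>. \<forall>F2\<in>\<F>.
       (\<exists>J\<in>\<F>. F1 \<subseteq> J \<and> F2 \<subseteq> J \<and> (\<forall>G\<in>\<F>. F1 \<subseteq> G \<and> F2 \<subseteq> G \<longrightarrow> J \<subseteq> G)) \<and>
       (\<exists>M\<in>\<F>. M \<subseteq> F1 \<and> M \<subseteq> F2 \<and> (\<forall>G\<in>\<F>. G \<subseteq> F1 \<and> G \<subseteq> F2 \<longrightarrow> G \<subseteq> M)))"

end

theory Submission
  imports Defs
begin

text \<open>On a ReLU class the activation pattern of every layer is fixed, so every
  pre-activation is an affine function of the input.  By induction over the layers,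
  a class is therefore cut out by finitely many affine inequalities, some strict
  (active neurons) and some non-strict (inactive ones).  For a nonempty set C of
  this form, the closure is the polyhedron Q obtained by relaxing the strict
  inequalities, and a face of Q that meets C has its relative interior inside C:
  a strict constraint vanishing somewhere in that relative interior would be a
  supporting hyperplane containing the whole face.  Every point of Q lies in the
  relative interior of the face cut out by its active constraints, so C is the
  disjoint union of the relative interiors of the faces of Q meeting C.  This
  family is closed under taking the smallest face containing a union of its
  members, which makes it a lattice.\<close>

definition affval :: "('a::real_inner \<times> real) \<Rightarrow> 'a \<Rightarrow> real" where
  "affval g z = fst g \<bullet> z + snd g"

definition sign_set :: "('a::real_inner \<times> real) set \<Rightarrow> ('a \<times> real) set \<Rightarrow> 'a set" where
  "sign_set S T = {z. (\<forall>g\<in>S. 0 < affval g z) \<and> (\<forall>g\<in>T. 0 \<le> affval g z)}"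

lemma affval_convex_comb:
  "affval g ((1 - u) *\<^sub>R x + u *\<^sub>R y) = (1 - u) * affval g x + u * affval g y"
  by (simp add: affval_def inner_add_right algebra_simps)

lemma sign_set_nonstrict_eq_halfspaces:
  "sign_set {} U = (\<Inter>g\<in>U. {x. fst g \<bullet> x \<ge> - snd g})"
  by (force simp: sign_set_def affval_def)

lemma sign_set_strict_eq_halfspaces:
  "sign_set U {} = (\<Inter>g\<in>U. {x. fst g \<bullet> x > - snd g})"
  by (force simp: sign_set_def affval_def)

lemma convex_sign_set_nonstrict: "convex (sign_set {} U)"
  unfolding sign_set_nonstrict_eq_halfspaces by (auto intro!: convex_INT convex_halfspace_ge)

lemma closed_sign_set_nonstrict: "closed (sign_set {} U)"
  unfolding sign_set_nonstrict_eq_halfspaces by (auto intro!: closed_INT closed_halfspace_ge)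

lemma polyhedron_sign_set_nonstrict:
  fixes U :: "('a::euclidean_space \<times> real) set"
  shows "finite U \<Longrightarrow> polyhedron (sign_set {} U)"
  unfolding sign_set_nonstrict_eq_halfspaces by (auto intro!: polyhedron_halfspace_ge)

lemma open_sign_set_strict: "finite U \<Longrightarrow> open (sign_set U {})"
  unfolding sign_set_strict_eq_halfspaces by (auto intro!: open_halfspace_gt)

lemma open_segment_subset_sign_set:
  assumes "c \<in> sign_set S T" and "y \<in> sign_set {} (S \<union> T)"
  shows "open_segment c y \<subseteq> sign_set S T"
proof
  fix p assume "p \<in> open_segment c y"
  then obtain u where "0 < u" "u < 1" and p: "p = (1 - u) *\<^sub>R c + u *\<^sub>R y"
    by (auto simp: in_segment)
  then show "p \<in> sign_set S T"
    using assms
    by (auto simp: sign_set_def p affval_convex_comb intro!: add_pos_nonneg add_nonneg_nonneg)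
qed

lemma closure_sign_set:
  fixes S T :: "('a::euclidean_space \<times> real) set"
  assumes "sign_set S T \<noteq> {}"
  shows "closure (sign_set S T) = sign_set {} (S \<union> T)"
proof
  show "closure (sign_set S T) \<subseteq> sign_set {} (S \<union> T)"
    by (rule closure_minimal[OF _ closed_sign_set_nonstrict]) (auto simp: sign_set_def)
  obtain c where c: "c \<in> sign_set S T" using assms by blast
  show "sign_set {} (S \<union> T) \<subseteq> closure (sign_set S T)"
  proof
    fix y assume y: "y \<in> sign_set {} (S \<union> T)"
    show "y \<in> closure (sign_set S T)"
    proof (cases "y = c")
      case False
      have "y \<in> closure (open_segment c y)"
        using False by simp
      also have "\<dots> \<subseteq> closure (sign_set S T)"
        using open_segment_subset_sign_set[OF c y] by (rule closure_mono)
      finally show ?thesis .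
    qed (use c closure_subset in blast)
  qed
qed

lemma face_of_sign_set_active:
  assumes "A \<subseteq> U"
  shows "{x \<in> sign_set {} U. \<forall>g\<in>A. affval g x = 0} face_of sign_set {} U"
proof -
  let ?Q = "sign_set {} U"
  have "{x \<in> ?Q. \<forall>g\<in>A. affval g x = 0}
          = \<Inter> (insert ?Q ((\<lambda>g. ?Q \<inter> {x. fst g \<bullet> x = - snd g}) ` A))"
    by (force simp: affval_def)
  also have "\<dots> face_of ?Q"
  proof (rule face_of_Inter)
    fix F assume "F \<in> insert ?Q ((\<lambda>g. ?Q \<inter> {x. fst g \<bullet> x = - snd g}) ` A)"
    moreover have "?Q \<inter> {x. fst g \<bullet> x = - snd g} face_of ?Q" if "g \<in> A" for g
      using that assms
      by (intro face_of_Int_supporting_hyperplane_ge convex_sign_set_nonstrict)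
         (force simp: sign_set_def affval_def)
    ultimately show "F face_of ?Q"
      using face_of_refl[OF convex_sign_set_nonstrict] by blast
  qed simp
  finally show ?thesis .
qed

lemma rel_interior_face_subset_sign_set:
  assumes F: "F face_of sign_set {} (S \<union> T)" and meets: "F \<inter> sign_set S T \<noteq> {}"
  shows "rel_interior F \<subseteq> sign_set S T"
proof
  let ?Q = "sign_set {} (S \<union> T)"
  fix p assume p: "p \<in> rel_interior F"
  have FQ: "F \<subseteq> ?Q" using F by (rule face_of_imp_subset)
  with p have pQ: "p \<in> ?Q" using rel_interior_subset by blast
  obtain z where z: "z \<in> F" "z \<in> sign_set S T" using meets by blast
  have "0 < affval g p" if g: "g \<in> S" for g
  proof (rule ccontr)
    let ?H = "{x \<in> ?Q. \<forall>h\<in>{g}. affval h x = 0}"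
    assume "\<not> 0 < affval g p"
    moreover have "0 \<le> affval g p" using pQ g by (simp add: sign_set_def)
    ultimately have "p \<in> ?H" using pQ by simp
    moreover have "?H face_of ?Q" using g by (intro face_of_sign_set_active) auto
    ultimately have "F \<subseteq> ?H" using subset_of_face_of[OF _ FQ] p by blast
    with z have "affval g z = 0" by blast
    moreover have "0 < affval g z" using z g by (simp add: sign_set_def)
    ultimately show False by simp
  qed
  with pQ show "p \<in> sign_set S T" by (auto simp: sign_set_def)
qed

lemma mem_rel_interior_active_face:
  fixes U :: "('a::euclidean_space \<times> real) set"
  assumes "finite U" and z: "z \<in> sign_set {} U"
  defines "A \<equiv> {g \<in> U. affval g z = 0}"
  shows "z \<in> rel_interior {x \<in> sign_set {} U. \<forall>g\<in>A. affval g x = 0}"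
proof -
  define F where "F = {x \<in> sign_set {} U. \<forall>g\<in>A. affval g x = 0}"
  define E where "E = {x. \<forall>g\<in>A. affval g x = 0}"
  have "E = (\<Inter>g\<in>A. {x. fst g \<bullet> x = - snd g})"
    by (force simp: E_def affval_def)
  then have "affine E" by (auto intro: affine_hyperplane)
  then have hull_E: "affine hull F \<subseteq> E"
    by (intro hull_minimal) (auto simp: F_def E_def)
  have "z \<in> sign_set (U - A) {}" using z by (auto simp: sign_set_def A_def)
  moreover have "open (sign_set (U - A) {})" using \<open>finite U\<close> by (intro open_sign_set_strict) auto
  ultimately obtain e where "0 < e" and e: "ball z e \<subseteq> sign_set (U - A) {}"
    by (meson open_contains_ball)
  have "ball z e \<inter> affine hull F \<subseteq> F"
  proof
    fix x assume "x \<in> ball z e \<inter> affine hull F"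
    then have x: "x \<in> sign_set (U - A) {}" "x \<in> E" using e hull_E by auto
    have "0 \<le> affval g x" if "g \<in> U" for g
      using x that by (cases "g \<in> A") (auto simp: E_def sign_set_def less_imp_le)
    with x show "x \<in> F" by (auto simp: F_def E_def sign_set_def)
  qed
  moreover have "z \<in> F" using z by (auto simp: F_def A_def)
  ultimately show ?thesis using \<open>0 < e\<close> by (auto simp: mem_rel_interior_ball F_def)
qed

lemma hull_of_faces_face_of:
  assumes "convex Q" "X \<subseteq> Q"
  shows "((\<lambda>F. F face_of Q) hull X) face_of Q"
  unfolding hull_def using assms by (intro face_of_Inter) (auto intro: face_of_refl)

lemma is_incl_lattice_faces_meeting:
  fixes Q C :: "'a::euclidean_space set"
  assumes "convex Q"
    and meets: "\<And>F. F face_of Q \<Longrightarrow> F \<inter> C \<noteq> {} \<Longrightarrow> rel_interior F \<subseteq> C"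
  shows "is_incl_lattice {F. F face_of Q \<and> rel_interior F \<subseteq> C}"
proof -
  let ?\<F> = "{F. F face_of Q \<and> rel_interior F \<subseteq> C}"
  let ?hull = "\<lambda>X. (\<lambda>F. F face_of Q) hull X"
  have hull_Union: "?hull (\<Union>\<G>) \<in> ?\<F>" if \<G>: "\<G> \<subseteq> ?\<F>" for \<G>
  proof (cases "\<Union>\<G> = {}")
    case True
    have "?hull (\<Union>\<G>) \<subseteq> {}" unfolding True by (rule hull_minimal) simp_all
    then show ?thesis by simp
  next
    case False
    then obtain F where F: "F \<in> \<G>" "F \<noteq> {}" by blast
    with \<G> have "F face_of Q" "rel_interior F \<subseteq> C" by blast+
    with F(2) have "rel_interior F \<noteq> {}"
      using face_of_imp_convex rel_interior_eq_empty by blast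
    moreover have "rel_interior F \<subseteq> ?hull (\<Union>\<G>)"
      using F(1) rel_interior_subset hull_subset[where S = "\<lambda>F. F face_of Q"] by blast
    moreover have "\<Union>\<G> \<subseteq> Q" using \<G> face_of_imp_subset by blast
    then have "?hull (\<Union>\<G>) face_of Q" using \<open>convex Q\<close> by (rule hull_of_faces_face_of[rotated])
    moreover note \<open>rel_interior F \<subseteq> C\<close>
    ultimately have "?hull (\<Union>\<G>) \<inter> C \<noteq> {}" using rel_interior_subset by blast
    with \<open>?hull (\<Union>\<G>) face_of Q\<close> show ?thesis using meets by blast
  qed
  show ?thesis
    unfolding is_incl_lattice_def
  proof (intro ballI conjI)
    fix F1 F2 assume F1: "F1 \<in> ?\<F>" and F2: "F2 \<in> ?\<F>"
    let ?J = "?hull (F1 \<union> F2)"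
    show "\<exists>J\<in>?\<F>. F1 \<subseteq> J \<and> F2 \<subseteq> J \<and> (\<forall>G\<in>?\<F>. F1 \<subseteq> G \<and> F2 \<subseteq> G \<longrightarrow> J \<subseteq> G)"
    proof (rule bexI[of _ ?J], intro conjI ballI impI)
      show "?J \<in> ?\<F>" using hull_Union[of "{F1, F2}"] F1 F2 by simp
      show "F1 \<subseteq> ?J" "F2 \<subseteq> ?J" using hull_subset[of "F1 \<union> F2"] by blast+
      fix G assume "G \<in> ?\<F>" "F1 \<subseteq> G \<and> F2 \<subseteq> G"
      then show "?J \<subseteq> G" by (intro hull_minimal) simp_all
    qed
    let ?M = "?hull (\<Union>{G \<in> ?\<F>. G \<subseteq> F1 \<inter> F2})"
    show "\<exists>M\<in>?\<F>. M \<subseteq> F1 \<and> M \<subseteq> F2 \<and> (\<forall>G\<in>?\<F>. G \<subseteq> F1 \<and> G \<subseteq> F2 \<longrightarrow> G \<subseteq> M)"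
    proof (rule bexI[of _ ?M], intro conjI ballI impI)
      show "?M \<in> ?\<F>" by (rule hull_Union) blast
      have "F1 \<inter> F2 face_of Q" using F1 F2 face_of_Int by blast
      then have "?M \<subseteq> F1 \<inter> F2" by (intro hull_minimal) blast+
      then show "?M \<subseteq> F1" "?M \<subseteq> F2" by blast+
      fix G assume "G \<in> ?\<F>" "G \<subseteq> F1 \<and> G \<subseteq> F2"
      then have "G \<subseteq> \<Union>{G \<in> ?\<F>. G \<subseteq> F1 \<inter> F2}" by blast
      then show "G \<subseteq> ?M" using hull_subset[where S = "\<lambda>F. F face_of Q"] by blast
    qed
  qed
qed

lemma sign_set_rel_interior_face_decomposition:
  fixes S T :: "('a::euclidean_space \<times> real) set"
  assumes "finite S" "finite T"
  defines "\<F> \<equiv> {F. F face_of sign_set {} (S \<union> T) \<and> rel_interior F \<subseteq> sign_set S T}"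
  shows "sign_set S T = \<Union> (rel_interior ` \<F>)"
    and "\<forall>F\<in>\<F>. \<forall>G\<in>\<F>. F \<noteq> G \<longrightarrow> rel_interior F \<inter> rel_interior G = {}"
    and "is_incl_lattice \<F>"
proof -
  let ?Q = "sign_set {} (S \<union> T)"
  show "sign_set S T = \<Union> (rel_interior ` \<F>)"
  proof
    show "sign_set S T \<subseteq> \<Union> (rel_interior ` \<F>)"
    proof
      fix z assume z: "z \<in> sign_set S T"
      define F where "F = {x \<in> ?Q. \<forall>g\<in>{g \<in> S \<union> T. affval g z = 0}. affval g x = 0}"
      have "z \<in> ?Q" using z by (auto simp: sign_set_def less_imp_le)
      then have "z \<in> rel_interior F"
        unfolding F_def using assms by (intro mem_rel_interior_active_face) auto
      moreover have "F face_of ?Q" unfolding F_def by (intro face_of_sign_set_active) blast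
      moreover have "rel_interior F \<subseteq> sign_set S T"
        using calculation z rel_interior_subset by (intro rel_interior_face_subset_sign_set) blast+
      ultimately show "z \<in> \<Union> (rel_interior ` \<F>)" unfolding \<F>_def by blast
    qed
    show "\<Union> (rel_interior ` \<F>) \<subseteq> sign_set S T" unfolding \<F>_def by blast
  qed
  show "\<forall>F\<in>\<F>. \<forall>G\<in>\<F>. F \<noteq> G \<longrightarrow> rel_interior F \<inter> rel_interior G = {}"
    unfolding \<F>_def using face_of_eq by blast
  show "is_incl_lattice \<F>"
    unfolding \<F>_def
    by (intro is_incl_lattice_faces_meeting convex_sign_set_nonstrict rel_interior_face_subset_sign_set)
qed

definition finite_sign_set :: "'a::real_inner set \<Rightarrow> bool" where
  "finite_sign_set X \<longleftrightarrow> (\<exists>S T. finite S \<and> finite T \<and> X = sign_set S T)"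

lemma finite_sign_set_Int:
  assumes "finite_sign_set X" "finite_sign_set Y"
  shows "finite_sign_set (X \<inter> Y)"
proof -
  obtain S T S' T' where "finite S" "finite T" "X = sign_set S T"
    and "finite S'" "finite T'" "Y = sign_set S' T'"
    using assms unfolding finite_sign_set_def by blast
  moreover have "sign_set S T \<inter> sign_set S' T' = sign_set (S \<union> S') (T \<union> T')"
    unfolding sign_set_def by blast
  ultimately show ?thesis unfolding finite_sign_set_def by blast
qed

lemma finite_sign_set_UNIV: "finite_sign_set UNIV"
  unfolding finite_sign_set_def by (rule exI[of _ "{}"], rule exI[of _ "{}"]) (simp add: sign_set_def)

lemma finite_sign_set_empty: "finite_sign_set {}"
  unfolding finite_sign_set_def
  by (rule exI[of _ "{(0, 0)}"], rule exI[of _ "{}"]) (simp add: sign_set_def affval_def)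

definition sign_bit :: "real \<Rightarrow> nat" where
  "sign_bit t = (if 0 < t then 1 else 0)"

lemma sign_bit_relu [simp]: "sign_bit (relu t) = sign_bit t"
  by (simp add: sign_bit_def relu_def)

lemma finite_sign_set_sign_bit: "finite_sign_set {z. sign_bit (affval h z) = b}"
proof -
  consider "b = 1" | "b = 0" | "b \<noteq> 0" "b \<noteq> 1" by blast
  then show ?thesis
  proof cases
    case 1
    then have "{z. sign_bit (affval h z) = b} = sign_set {h} {}"
      by (auto simp: sign_set_def sign_bit_def)
    then show ?thesis unfolding finite_sign_set_def by blast
  next
    case 2
    then have "{z. sign_bit (affval h z) = b} = sign_set {} {- h}"
      by (auto simp: sign_set_def sign_bit_def affval_def)
    then show ?thesis unfolding finite_sign_set_def by blast
  next
    case 3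
    then show ?thesis by (simp add: sign_bit_def finite_sign_set_empty)
  qed
qed

lemma finite_sign_set_sign_pattern:
  "finite_sign_set {z. map (\<lambda>h. sign_bit (affval h z)) Hs = d}"
proof (induction Hs arbitrary: d)
  case Nil
  show ?case by (cases "d = []") (simp_all add: finite_sign_set_UNIV finite_sign_set_empty)
next
  case (Cons h Hs)
  note IH = Cons.IH
  show ?case
  proof (cases d)
    case Nil
    then show ?thesis by (simp add: finite_sign_set_empty)
  next
    case (Cons b d')
    then have "{z. map (\<lambda>h. sign_bit (affval h z)) (h # Hs) = d}
        = {z. sign_bit (affval h z) = b} \<inter> {z. map (\<lambda>h. sign_bit (affval h z)) Hs = d'}"
      by auto
    then show ?thesis
      using finite_sign_set_Int[OF finite_sign_set_sign_bit IH] by simp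
  qed
qed

definition mask_inactive :: "nat list \<Rightarrow> ('a::real_inner \<times> real) list \<Rightarrow> ('a \<times> real) list" where
  "mask_inactive d Hs = map2 (\<lambda>b h. if b = 1 then h else 0) d Hs"

lemma relu_affvals_eq_masked:
  "map (\<lambda>h. sign_bit (affval h z)) Hs = d \<Longrightarrow>
    map (\<lambda>h. relu (affval h z)) Hs = map (\<lambda>g. affval g z) (mask_inactive d Hs)"
  by (induction Hs arbitrary: d) (auto simp: mask_inactive_def sign_bit_def relu_def affval_def)

definition affine_row_pullback ::
  "real list \<Rightarrow> real \<Rightarrow> ('a::real_inner \<times> real) list \<Rightarrow> 'a \<times> real" where
  "affine_row_pullback w b Gs = sum_list (map2 (*\<^sub>R) w Gs) + (0, b)"

lemma affval_affine_row_pullback: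
  "affval (affine_row_pullback w b Gs) z = affine_row w b (map (\<lambda>g. affval g z) Gs)"
proof (induction w arbitrary: b Gs)
  case Nil
  then show ?case by (simp add: affine_row_pullback_def affine_row_def affval_def)
next
  case (Cons a w)
  then show ?case
    by (cases Gs) (auto simp: affine_row_pullback_def affine_row_def affval_def
        inner_add_left algebra_simps)
qed

lemma layer_act_affvals:
  "layer_act L (map (\<lambda>g. affval g z) Gs)
     = map (\<lambda>h. relu (affval h z)) (map (\<lambda>(w, b). affine_row_pullback w b Gs) L)"
  by (auto simp: layer_act_def affval_affine_row_pullback)

lemma first_layer_act_affvals: "first_layer_act L1 z = map (\<lambda>h. relu (affval h z)) L1"
  by (auto simp: first_layer_act_def affval_def)

definition later_code :: "(real list \<times> real) list list \<Rightarrow> real list \<Rightarrow> nat list" where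
  "later_code Ls a = concat (map (map sign_bit) (later_acts Ls a))"

lemma later_code_Nil: "later_code [] a = []"
  by (simp add: later_code_def)

lemma later_code_Cons:
  "later_code (L # Ls) a = map sign_bit (layer_act L a) @ later_code Ls (layer_act L a)"
  by (simp add: later_code_def Let_def)

lemma relu_code_eq_later_code:
  "relu_code L1 Ls x = map sign_bit (first_layer_act L1 x) @ later_code Ls (first_layer_act L1 x)"
  by (simp add: relu_code_def activations_def later_code_def Let_def sign_bit_def[abs_def])

lemma finite_sign_set_layer_code:
  fixes Hs :: "('a::real_inner \<times> real) list"
  assumes later: "\<And>(Gs :: ('a \<times> real) list) c.
    finite_sign_set {z. later_code Ls (map (\<lambda>g. affval g z) Gs) = c}"
  shows "finite_sign_set {z. map sign_bit (map (\<lambda>h. relu (affval h z)) Hs)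
                               @ later_code Ls (map (\<lambda>h. relu (affval h z)) Hs) = c}"
proof -
  define d where "d = take (length Hs) c"
  have "map sign_bit (map (\<lambda>h. relu (affval h z)) Hs)
          @ later_code Ls (map (\<lambda>h. relu (affval h z)) Hs) = c
      \<longleftrightarrow> map (\<lambda>h. sign_bit (affval h z)) Hs = d
          \<and> later_code Ls (map (\<lambda>g. affval g z) (mask_inactive d Hs)) = drop (length Hs) c" for z
  proof (cases "map (\<lambda>h. sign_bit (affval h z)) Hs = d")
    case True
    note relu = relu_affvals_eq_masked[OF True]
    have "map sign_bit (map (\<lambda>g. affval g z) (mask_inactive d Hs)) = d"
      using True unfolding relu[symmetric] by (simp add: o_def)
    moreover have "length d = length Hs" using True by auto
    ultimately show ?thesis
      using True by (auto simp: relu append_eq_conv_conj d_def)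
  qed (auto simp: append_eq_conv_conj d_def o_def)
  then have eq: "{z. map sign_bit (map (\<lambda>h. relu (affval h z)) Hs)
                 @ later_code Ls (map (\<lambda>h. relu (affval h z)) Hs) = c}
      = {z. map (\<lambda>h. sign_bit (affval h z)) Hs = d}
        \<inter> {z. later_code Ls (map (\<lambda>g. affval g z) (mask_inactive d Hs)) = drop (length Hs) c}"
    by blast
  show ?thesis
    unfolding eq by (intro finite_sign_set_Int finite_sign_set_sign_pattern later)
qed

lemma finite_sign_set_later_code:
  "finite_sign_set {z. later_code Ls (map (\<lambda>g. affval g z) Gs) = c}"
proof (induction Ls arbitrary: Gs c)
  case Nil
  show ?case
    by (cases "c = []") (simp_all add: later_code_Nil finite_sign_set_UNIV finite_sign_set_empty)
next
  case (Cons L Ls)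
  show ?case
    unfolding later_code_Cons layer_act_affvals by (rule finite_sign_set_layer_code) (rule Cons.IH)
qed

lemma finite_sign_set_relu_code_fibre:
  "finite_sign_set {z. relu_code L1 Ls z = c}"
  unfolding relu_code_eq_later_code first_layer_act_affvals
  by (rule finite_sign_set_layer_code) (rule finite_sign_set_later_code)

lemma length_later_acts: "map length (later_acts Ls a) = map length Ls"
  by (induction Ls arbitrary: a) (auto simp: Let_def layer_act_def)

lemma length_relu_code: "length (relu_code L1 Ls x) = length L1 + sum_list (map length Ls)"
proof -
  have "map length (activations L1 Ls x) = length L1 # map length Ls"
    by (simp add: activations_def Let_def length_later_acts first_layer_act_def)
  then show ?thesis
    by (simp add: relu_code_def length_concat o_def)
qed

lemma hamming_eq_0_iff: "length a = length b \<Longrightarrow> hamming a b = 0 \<longleftrightarrow> a = b"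
  by (auto simp: hamming_def intro: nth_equalityI)

lemma relu_class_eq: "relu_class L1 Ls x = {z. relu_code L1 Ls z = relu_code L1 Ls x}"
  by (simp add: relu_class_def relu_equiv_def hamming_eq_0_iff length_relu_code)

lemma bij_betw_fibres: "bij_betw (\<lambda>c. {z. f z = c}) (range f) (range (\<lambda>x. {z. f z = f x}))"
proof (rule bij_betw_imageI)
  show "inj_on (\<lambda>c. {z. f z = c}) (range f)"
    by (rule inj_onI) blast
qed (auto simp: image_image)

lemma bij_betw_relu_codes_classes:
  "bij_betw (\<lambda>c. {z. hamming (relu_code L1 Ls z) c = 0})
     (range (relu_code L1 Ls)) (range (relu_class L1 Ls))"
proof -
  have "relu_class L1 Ls = (\<lambda>x. {z. relu_code L1 Ls z = relu_code L1 Ls x})"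
    by (intro ext relu_class_eq)
  then have "bij_betw (\<lambda>c. {z. relu_code L1 Ls z = c})
      (range (relu_code L1 Ls)) (range (relu_class L1 Ls))"
    using bij_betw_fibres by simp
  moreover have "bij_betw (\<lambda>c. {z. hamming (relu_code L1 Ls z) c = 0}) (range (relu_code L1 Ls)) B
      = bij_betw (\<lambda>c. {z. relu_code L1 Ls z = c}) (range (relu_code L1 Ls)) B" for B
    by (rule bij_betw_cong) (auto simp: hamming_eq_0_iff length_relu_code)
  ultimately show ?thesis by simp
qed

lemma relu_class_rel_interior_face_decomposition:
  fixes L1 :: "((real^'m) \<times> real) list"
  shows "polyhedron (closure (relu_class L1 Ls x)) \<and>
    (\<exists>\<F>. \<F> \<subseteq> {F. F face_of closure (relu_class L1 Ls x)} \<and>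
         relu_class L1 Ls x = \<Union> (rel_interior ` \<F>) \<and>
         (\<forall>F\<in>\<F>. \<forall>G\<in>\<F>. F \<noteq> G \<longrightarrow> rel_interior F \<inter> rel_interior G = {}) \<and>
         is_incl_lattice \<F>)"
proof -
  obtain S T where "finite S" "finite T" and x_class: "relu_class L1 Ls x = sign_set S T"
    using finite_sign_set_relu_code_fibre unfolding relu_class_eq finite_sign_set_def by blast
  have "x \<in> relu_class L1 Ls x" by (simp add: relu_class_eq)
  then have x_closure: "closure (sign_set S T) = sign_set {} (S \<union> T)"
    unfolding x_class by (intro closure_sign_set) blast
  let ?\<F> = "{F. F face_of sign_set {} (S \<union> T) \<and> rel_interior F \<subseteq> sign_set S T}"
  show ?thesis
    unfolding x_class x_closure
    using sign_set_rel_interior_face_decomposition[OF \<open>finite S\<close> \<open>finite T\<close>]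
      polyhedron_sign_set_nonstrict[of "S \<union> T"] \<open>finite S\<close> \<open>finite T\<close>
    by (intro conjI exI[of _ ?\<F>]) (simp_all add: Collect_mono_iff)
qed

theorem theorem1:
  fixes L1 :: "((real^'m) \<times> real) list" and Ls :: "(real list \<times> real) list list"
  assumes "wf_relu_net L1 Ls"
  shows "bij_betw (\<lambda>c. {z. hamming (relu_code L1 Ls z) c = 0})
           (range (relu_code L1 Ls)) (range (relu_class L1 Ls)) \<and>
         (\<forall>x. polyhedron (closure (relu_class L1 Ls x))) \<and>
         (\<forall>x. \<exists>\<F>. \<F> \<subseteq> {F. F face_of closure (relu_class L1 Ls x)} \<and>
                 relu_class L1 Ls x = \<Union> (rel_interior ` \<F>) \<and>
                 (\<forall>F\<in>\<F>. \<forall>G\<in>\<F>. F \<noteq> G \<longrightarrow> rel_interior F \<inter> rel_interior G = {}) \<and>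
                 is_incl_lattice \<F>)"
  by (intro conjI allI bij_betw_relu_codes_classes
      relu_class_rel_interior_face_decomposition[THEN conjunct1]
      relu_class_rel_interior_face_decomposition[THEN conjunct2])

end
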